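(* Consider an additive noise channel $\mathbf r=\sqrt{p_s}\,\mathbf s+\boldsymbol\xi$ in $\mathbb R^n$ where the noise has density $f_{\boldsymbol\xi}(\mathbf x)=\int_0^\infty(2\pi\sigma^2)^{-n/2}\exp\{-|\mathbf x|^2/(2\sigma^2)\}f(\sigma)\,d\sigma$ for a univariate probability density $f(\sigma)$ with bounded support, $f(\sigma)=0$ for $\sigma\notin[\sigma_1,\sigma_2]$. Then the average symbol error rate $P_e(p_s)$ of any decoder with center-convex decision regions satisfies $P_e''(p_s)\ge0$ if $p_s\ge(n-2)\sigma_2^2/d_{\min}^2$, and $P_e''(p_s)\le 0$ if $p_s\le(n-2)\sigma_1^2/d_{\max}^2$.
   Context: This noise is a spherically-invariant (SIRP) noise with identity covariance shape. $p_s$ is the signal power: the normalized constellation $\{\mathbf s_1,\dots,\mathbf s_M\}$ (priors $\pi_k$) corresponds to $p_s=1$ and has pairwise disjoint decision regions $\Omega_k$; at signal power $p_s$ the transmitted points are $\sqrt{p_s}\mathbf s_k$ and the decision regions are $\sqrt{p_s}\Omega_k$ (output $\sqrt{p_s}\mathbf s_k$ if $\mathbf r\in\sqrt{p_s}\Omega_k$, error if $\mathbf r$ is in no region). $\Omega_k$ is center-convex if for every $\mathbf x\in\Omega_k$ the segment from $\mathbf s_k$ to $\mathbf x$ lies in $\Omega_k$ (e.g. min-distance/ML Voronoi regions). $P_e=\sum_k\pi_k(1-\Pr[\mathbf r\in\sqrt{p_s}\Omega_k\mid\text{$\sqrt{p_s}\mathbf s_k$ sent}])$. $d_{\min}$ ($d_{\max}$)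 is the minimum over $k$ of the minimum distance (maximum over $k$ of the maximum distance) from $\mathbf s_k$ to the boundary of $\Omega_k$ in the normalized constellation. *)

theory Defs
  imports "HOL-Analysis.Analysis"
begin

definition sirp_density :: "(real \<Rightarrow> real) \<Rightarrow> 'a::euclidean_space \<Rightarrow> real" where
  "sirp_density f x =
     (LINT \<sigma>:{0<..}|lborel.
        (2 * pi * \<sigma>\<^sup>2) powr (- real DIM('a) / 2) * exp (- (norm x)\<^sup>2 / (2 * \<sigma>\<^sup>2)) * f \<sigma>)"

definition symbol_error_rate ::
  "('a::euclidean_space \<Rightarrow> real) \<Rightarrow> nat \<Rightarrow> (nat \<Rightarrow> real) \<Rightarrow> (nat \<Rightarrow> 'a) \<Rightarrow> (nat \<Rightarrow> 'a set) \<Rightarrow> real \<Rightarrow> real"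
  where
  "symbol_error_rate fxi M prior s \<Omega> p =
     (\<Sum>k<M. prior k *
        (1 - (LINT r:((\<lambda>x. sqrt p *\<^sub>R x) ` \<Omega> k)|lborel. fxi (r - sqrt p *\<^sub>R s k))))"

definition center_convex :: "'a::real_vector \<Rightarrow> 'a set \<Rightarrow> bool" where
  "center_convex c \<Omega> \<longleftrightarrow> (\<forall>x\<in>\<Omega>. closed_segment c x \<subseteq> \<Omega>)"

definition d_min :: "nat \<Rightarrow> (nat \<Rightarrow> 'a::euclidean_space) \<Rightarrow> (nat \<Rightarrow> 'a set) \<Rightarrow> real" where
  "d_min M s \<Omega> = Min ((\<lambda>k. infdist (s k) (frontier (\<Omega> k))) ` {..<M})"

text \<open>Maximum over k of the maximal distance from s k to the boundary of Omega k
  (extended real: may be infinite for unbounded regions).\<close>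
definition d_max :: "nat \<Rightarrow> (nat \<Rightarrow> 'a::euclidean_space) \<Rightarrow> (nat \<Rightarrow> 'a set) \<Rightarrow> ereal" where
  "d_max M s \<Omega> = Max ((\<lambda>k. SUP b\<in>frontier (\<Omega> k). ereal (dist (s k) b)) ` {..<M})"

end

theory Submission
  imports Defs "HOL-Probability.Probability"
begin

text \<open>
  Centre each decision region at its constellation point, \<open>A\<^sub>k = \<Omega>\<^sub>k - s\<^sub>k\<close>. The substitution
  \<open>r = \<surd>p (s\<^sub>k + y)\<close> writes the probability of a correct decision as
  \<open>\<integral> f(\<sigma>) G\<^sub>k(p / \<sigma>\<^sup>2) d\<sigma>\<close>, where \<open>G\<^sub>k(a)\<close> is the mass of \<open>A\<^sub>k\<close> under the centred Gaussian of
  precision \<open>a\<close>; hence \<open>P\<^sub>e''(p) = - \<Sum>\<^sub>k \<pi>\<^sub>k \<integral> f(\<sigma>) G\<^sub>k''(p / \<sigma>\<^sup>2) \<sigma>\<^sup>-\<^sup>4 d\<sigma>\<close> and only the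
  sign of \<open>G\<^sub>k''\<close> matters.

  For a region \<open>A\<close> that is star-shaped about the origin, \<open>G''(a)\<close> is the derivative at \<open>l = 1\<close> of
  the integral over the dilate \<open>l A\<close> of \<open>Q\<^sub>a(z) = \<phi>\<^sub>a(z) (n - 2 - a |z|\<^sup>2) / (4 a\<^sup>2)\<close>, which is
  positive inside and negative outside the sphere of radius \<open>\<surd>((n - 2) / a)\<close>. If \<open>A\<close> contains
  that ball, dilating \<open>A\<close> only adds negative mass, so \<open>G'' \<le> 0\<close>; if \<open>A\<close> lies inside it,
  shrinking \<open>A\<close> only removes positive mass, so \<open>G'' \<ge> 0\<close>. For \<open>a = p / \<sigma>\<^sup>2\<close> with
  \<open>\<sigma>\<^sub>1 \<le> \<sigma> \<le> \<sigma>\<^sub>2\<close> these are exactly the conditions on \<open>d\<^sub>m\<^sub>i\<^sub>n\<close> and \<open>d\<^sub>m\<^sub>a\<^sub>x\<close>.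
\<close>

lemma tendsto_integral_dominated_at:
  fixes q :: "'a::first_countable_topology \<Rightarrow> 'b \<Rightarrow> real"
  assumes meas_g: "g \<in> borel_measurable M"
    and lim: "\<And>y. ((\<lambda>t. q t y) \<longlongrightarrow> g y) (at x0)"
    and bound: "\<forall>\<^sub>F t in at x0. q t \<in> borel_measurable M \<and> (\<forall>y. \<bar>q t y\<bar> \<le> B y)"
    and int_B: "integrable M B"
  shows "((\<lambda>t. LINT y|M. q t y) \<longlongrightarrow> (LINT y|M. g y)) (at x0)"
  unfolding tendsto_at_iff_sequentially comp_def
proof (intro allI impI)
  fix X :: "nat \<Rightarrow> 'a" assume "\<forall>i. X i \<in> UNIV - {x0}" "X \<longlonglongrightarrow> x0"
  then have X: "filterlim X (at x0) sequentially" by (simp add: filterlim_at)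
  obtain N where N: "\<And>n. N \<le> n \<Longrightarrow> q (X n) \<in> borel_measurable M \<and> (\<forall>y. \<bar>q (X n) y\<bar> \<le> B y)"
    using filterlim_iff[THEN iffD1, OF X, rule_format, OF bound]
    by (auto simp: eventually_sequentially)
  show "(\<lambda>n. LINT y|M. q (X n) y) \<longlonglongrightarrow> (LINT y|M. g y)"
  proof (rule LIMSEQ_offset, rule integral_dominated_convergence[where w=B])
    show "AE y in M. (\<lambda>n. q (X (n + N)) y) \<longlonglongrightarrow> g y"
      by (intro AE_I2 LIMSEQ_ignore_initial_segment filterlim_compose[OF lim X])
    show "AE y in M. norm (q (X (n + N)) y) \<le> B y" for n
      using N[of "n + N"] by auto
  qed (use N meas_g int_B in auto)
qed

lemma DERIV_integral_dominated:
  fixes \<phi> \<phi>' :: "real \<Rightarrow> 'b \<Rightarrow> real" and B :: "'b \<Rightarrow> real"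
  assumes e: "0 < e"
    and deriv: "\<And>t y. t \<in> ball x0 e \<Longrightarrow> ((\<lambda>t. \<phi> t y) has_real_derivative \<phi>' t y) (at t)"
    and meas: "\<And>t. t \<in> ball x0 e \<Longrightarrow> \<phi> t \<in> borel_measurable M"
    and meas': "\<phi>' x0 \<in> borel_measurable M"
    and int: "integrable M (\<phi> x0)"
    and bound: "\<And>t y. t \<in> ball x0 e \<Longrightarrow> \<bar>\<phi>' t y\<bar> \<le> B y"
    and int_B: "integrable M B"
  shows "((\<lambda>t. LINT y|M. \<phi> t y) has_real_derivative (LINT y|M. \<phi>' x0 y)) (at x0)"
proof -
  have x0: "x0 \<in> ball x0 e" using e by simp
  have lip: "\<bar>\<phi> t y - \<phi> x0 y\<bar> \<le> B y * \<bar>t - x0\<bar>" if "t \<in> ball x0 e" for t y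
    using field_differentiable_bound[of "ball x0 e" "\<lambda>t. \<phi> t y" "\<lambda>t. \<phi>' t y" "B y" t x0]
      deriv bound that x0 by (auto intro: has_field_derivative_at_within)
  have B_nonneg: "0 \<le> B y" for y
    using bound[OF x0, of y] by linarith
  have int_t: "integrable M (\<phi> t)" if t: "t \<in> ball x0 e" for t
  proof -
    have "integrable M (\<lambda>y. \<phi> t y - \<phi> x0 y)"
      by (rule Bochner_Integration.integrable_bound[OF integrable_mult_left[OF int_B, of "\<bar>t - x0\<bar>"]])
        (use meas[OF t] meas[OF x0] lip[OF t] B_nonneg in \<open>auto simp: abs_mult\<close>)
    from Bochner_Integration.integrable_add[OF this int] show ?thesis by simp
  qed
  define q where "q t y = (\<phi> t y - \<phi> x0 y) / (t - x0)" for t y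
  have meas_q: "q t \<in> borel_measurable M" if "t \<in> ball x0 e" for t
    unfolding q_def by (intro borel_measurable_divide borel_measurable_diff meas that x0 borel_measurable_const)
  have "((\<lambda>t. LINT y|M. q t y) \<longlongrightarrow> (LINT y|M. \<phi>' x0 y)) (at x0)"
  proof (rule tendsto_integral_dominated_at[where B=B])
    show "((\<lambda>t. q t y) \<longlongrightarrow> \<phi>' x0 y) (at x0)" for y
      using deriv[OF x0, of y] unfolding has_field_derivative_iff q_def .
    show "\<forall>\<^sub>F t in at x0. q t \<in> borel_measurable M \<and> (\<forall>y. \<bar>q t y\<bar> \<le> B y)"
      using eventually_at_ball'[OF e, of x0 UNIV]
      by eventually_elim (use lip meas_q in \<open>auto simp: q_def divide_le_eq\<close>)
  qed (use meas' int_B in auto)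
  moreover have "\<forall>\<^sub>F t in at x0. (LINT y|M. q t y) = ((LINT y|M. \<phi> t y) - (LINT y|M. \<phi> x0 y)) / (t - x0)"
    using eventually_at_ball'[OF e, of x0 UNIV]
    by eventually_elim (simp add: q_def int_t int)
  ultimately show ?thesis
    unfolding has_field_derivative_iff by (rule Lim_transform_eventually)
qed

lemma power_le_exp_mult:
  fixes t c :: real
  assumes "0 \<le> t" "0 < c"
  shows "t ^ j \<le> (real j / c) ^ j * exp (c * t)"
proof (cases "j = 0")
  case False
  have "t \<le> real j / c * (1 + c * t / real j)"
    using assms False by (simp add: field_simps)
  then have "t ^ j \<le> (real j / c * (1 + c * t / real j)) ^ j"
    using assms by (intro power_mono) auto
  also have "\<dots> = (real j / c) ^ j * (1 + c * t / real j) ^ j"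
    by (rule power_mult_distrib)
  also have "\<dots> \<le> (real j / c) ^ j * exp (c * t)"
    using assms False
    by (intro mult_left_mono exp_ge_one_plus_x_over_n_power_n) (auto intro: order_trans[of _ 0])
  finally show ?thesis .
qed (use assms in simp)

lemma integrable_exp_minus_square:
  fixes c :: real
  assumes "0 < c"
  shows "integrable lborel (\<lambda>x::real. exp (- c * x\<^sup>2))"
proof -
  define \<sigma> where "\<sigma> = sqrt (1 / (2 * c))"
  have \<sigma>: "0 < \<sigma>" "2 * \<sigma>\<^sup>2 = 1 / c"
    using assms by (simp_all add: \<sigma>_def)
  have "sqrt (2 * pi * \<sigma>\<^sup>2) * normal_density 0 \<sigma> x = exp (- c * x\<^sup>2)" for x
    using \<sigma> assms by (simp add: normal_density_def)
  with integrable_mult_right[OF integrable_normal_density[OF \<sigma>(1)], of "sqrt (2 * pi * \<sigma>\<^sup>2)" 0]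
  show ?thesis by simp
qed

lemma norm_sum_Basis_power2:
  "(norm (\<Sum>b\<in>Basis. f b *\<^sub>R b :: 'a::euclidean_space))\<^sup>2 = (\<Sum>b\<in>Basis. (f b)\<^sup>2)"
proof -
  have "(\<Sum>b'\<in>Basis. f b' *\<^sub>R b' :: 'a) \<bullet> b = f b" if "b \<in> Basis" for b
    using that by (simp add: inner_sum_left inner_Basis if_distrib cong: if_cong)
  then show ?thesis
    unfolding power2_norm_eq_inner by (subst euclidean_inner) (simp add: power2_eq_square)
qed

text \<open>In coordinates the integrand is a product of one-dimensional Gaussians.\<close>

lemma integrable_gaussian:
  fixes c :: real
  assumes "0 < c"
  shows "integrable lborel (\<lambda>y::'a::euclidean_space. exp (- c * (norm y)\<^sup>2))"
proof -
  interpret product_sigma_finite "\<lambda>_. lborel" by standard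
  have "integrable (Pi\<^sub>M Basis (\<lambda>_. lborel)) (\<lambda>f. \<Prod>b\<in>(Basis::'a set). exp (- c * (f b)\<^sup>2))"
    by (rule product_integrable_prod) (use integrable_exp_minus_square[OF assms] in auto)
  moreover have "(\<Prod>b\<in>(Basis::'a set). exp (- c * (f b)\<^sup>2))
      = exp (- c * (norm (\<Sum>b\<in>Basis. f b *\<^sub>R b :: 'a))\<^sup>2)" for f
    by (simp add: norm_sum_Basis_power2 exp_sum[symmetric] sum_distrib_left)
  ultimately have "integrable (distr (Pi\<^sub>M Basis (\<lambda>_. lborel)) borel (\<lambda>f. \<Sum>b\<in>Basis. f b *\<^sub>R b :: 'a))
      (\<lambda>y. exp (- c * (norm y)\<^sup>2))"
    by (subst integrable_distr_eq) auto
  then show ?thesis by (simp add: lborel_eq[symmetric])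
qed

lemma integrable_gaussian_moment:
  fixes c :: real
  assumes "0 < c"
  shows "integrable lborel (\<lambda>y::'a::euclidean_space. exp (- c * (norm y)\<^sup>2) * ((norm y)\<^sup>2) ^ j)"
proof (rule Bochner_Integration.integrable_bound)
  show "integrable lborel (\<lambda>y::'a. (2 * real j / c) ^ j * exp (- (c / 2) * (norm y)\<^sup>2))"
    by (intro integrable_mult_right integrable_gaussian) (use assms in simp)
  have "exp (- c * (norm y)\<^sup>2) * ((norm y)\<^sup>2) ^ j
      \<le> exp (- c * (norm y)\<^sup>2) * ((2 * real j / c) ^ j * exp (c / 2 * (norm y)\<^sup>2))" for y :: 'a
    using power_le_exp_mult[of "(norm y)\<^sup>2" "c / 2" j] assms by (intro mult_left_mono) (auto simp: mult.commute)
  also have "\<dots> y = (2 * real j / c) ^ j * exp (- (c / 2) * (norm y)\<^sup>2)" for y :: 'a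
    by (simp add: exp_add[symmetric] field_simps)
  finally show "AE y in lborel. norm (exp (- c * (norm y)\<^sup>2) * ((norm y)\<^sup>2) ^ j)
      \<le> norm ((2 * real j / c) ^ j * exp (- (c / 2) * (norm (y::'a))\<^sup>2))"
    using assms by (intro AE_I2) simp
qed auto

lemma integrable_gaussian_quadratic:
  fixes c :: real
  assumes "0 < c"
  shows "integrable lborel (\<lambda>y::'a::euclidean_space.
    exp (- c * (norm y)\<^sup>2) * (\<alpha> + \<beta> * (norm y)\<^sup>2 + \<gamma> * ((norm y)\<^sup>2)\<^sup>2))"
proof -
  have "integrable lborel (\<lambda>y::'a. \<alpha> * (exp (- c * (norm y)\<^sup>2) * ((norm y)\<^sup>2) ^ 0)
      + \<beta> * (exp (- c * (norm y)\<^sup>2) * ((norm y)\<^sup>2) ^ 1) + \<gamma> * (exp (- c * (norm y)\<^sup>2) * ((norm y)\<^sup>2) ^ 2))"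
    by (intro Bochner_Integration.integrable_add integrable_mult_right integrable_gaussian_moment assms)
  then show ?thesis by (simp add: algebra_simps)
qed

lemma lborel_integral_affine_euclidean:
  fixes F :: "'a::euclidean_space \<Rightarrow> real"
  assumes "c \<noteq> 0" and [measurable]: "F \<in> borel_measurable borel"
  shows "(LINT x|lborel. F x) = \<bar>c\<bar> ^ DIM('a) * (LINT y|lborel. F (t + c *\<^sub>R y))"
  by (subst lborel_affine[OF assms(1), of t]) (simp add: integral_density integral_distr)

lemma lborel_integral_scaleR_sqrt:
  fixes F :: "'a::euclidean_space \<Rightarrow> real"
  assumes "0 < a" and [measurable]: "F \<in> borel_measurable borel"
  shows "(LINT y|lborel. a powr (real DIM('a) / 2) * F (sqrt a *\<^sub>R y)) = (LINT z|lborel. F z)"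
  using lborel_integral_affine_euclidean[of "sqrt a" F 0] assms
  by (simp add: powr_half_sqrt[symmetric] powr_realpow[symmetric] powr_powr)

definition gauss_kernel :: "real \<Rightarrow> 'a::euclidean_space \<Rightarrow> real" where
  "gauss_kernel a y =
     (2 * pi) powr (- real DIM('a) / 2) * a powr (real DIM('a) / 2) * exp (- (a * (norm y)\<^sup>2) / 2)"

definition gauss_kernel' :: "real \<Rightarrow> 'a::euclidean_space \<Rightarrow> real" where
  "gauss_kernel' a y = gauss_kernel a y * (real DIM('a) / (2 * a) - (norm y)\<^sup>2 / 2)"

definition gauss_kernel'' :: "real \<Rightarrow> 'a::euclidean_space \<Rightarrow> real" where
  "gauss_kernel'' a y =
     gauss_kernel a y * ((real DIM('a) / (2 * a) - (norm y)\<^sup>2 / 2)\<^sup>2 - real DIM('a) / (2 * a\<^sup>2))"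

lemma gauss_kernel_nonneg: "0 \<le> gauss_kernel a y"
  by (simp add: gauss_kernel_def)

lemma measurable_gauss_kernel_pair [measurable]:
  "(\<lambda>(a, y). gauss_kernel a y) \<in> borel_measurable (borel \<Otimes>\<^sub>M borel)"
  "(\<lambda>(a, y). gauss_kernel' a y) \<in> borel_measurable (borel \<Otimes>\<^sub>M borel)"
  "(\<lambda>(a, y). gauss_kernel'' a y) \<in> borel_measurable (borel \<Otimes>\<^sub>M borel)"
  unfolding gauss_kernel_def gauss_kernel'_def gauss_kernel''_def by measurable

lemma measurable_gauss_kernel [measurable]:
  "gauss_kernel a \<in> borel_measurable borel"
  "gauss_kernel' a \<in> borel_measurable borel"
  "gauss_kernel'' a \<in> borel_measurable borel"
  unfolding gauss_kernel_def[abs_def] gauss_kernel'_def[abs_def] gauss_kernel''_def[abs_def] by measurable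

lemma DERIV_gauss_kernel:
  assumes "0 < a"
  shows "((\<lambda>a. gauss_kernel a y) has_real_derivative gauss_kernel' a y) (at a)"
proof -
  have "a * a powr ((real DIM('a) - 2) / 2) = a powr (real DIM('a) / 2)"
    using assms by (subst powr_mult_base) (auto simp: field_simps)
  with assms show ?thesis
    unfolding gauss_kernel'_def gauss_kernel_def
    by (auto intro!: derivative_eq_intros simp: field_simps)
qed

lemma DERIV_gauss_kernel':
  assumes "0 < a"
  shows "((\<lambda>a. gauss_kernel' a y) has_real_derivative gauss_kernel'' a y) (at a)"
proof -
  let ?n = "real DIM('a)"
  have "((\<lambda>a. ?n / (2 * a) - (norm y)\<^sup>2 / 2) has_real_derivative - ?n / (2 * a\<^sup>2)) (at a)"
    using assms by (auto intro!: derivative_eq_intros simp: power2_eq_square field_simps)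
  from DERIV_mult'[OF DERIV_gauss_kernel[OF assms] this]
  have "((\<lambda>a. gauss_kernel a y * (?n / (2 * a) - (norm y)\<^sup>2 / 2)) has_real_derivative
      gauss_kernel a y * (- ?n / (2 * a\<^sup>2)) + gauss_kernel' a y * (?n / (2 * a) - (norm y)\<^sup>2 / 2)) (at a)" .
  then show ?thesis
    unfolding gauss_kernel'_def[abs_def] gauss_kernel''_def by (simp add: power2_eq_square algebra_simps)
qed

lemma integrable_gauss_kernel_quadratic:
  assumes "0 < a"
  shows "integrable lborel (\<lambda>y::'a::euclidean_space.
    gauss_kernel a y * (\<alpha> + \<beta> * (norm y)\<^sup>2 + \<gamma> * ((norm y)\<^sup>2)\<^sup>2))"
proof -
  have "integrable lborel (\<lambda>y::'a. (2 * pi) powr (- real DIM('a) / 2) * a powr (real DIM('a) / 2) *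
      (exp (- (a / 2) * (norm y)\<^sup>2) * (\<alpha> + \<beta> * (norm y)\<^sup>2 + \<gamma> * ((norm y)\<^sup>2)\<^sup>2)))"
    using assms by (intro integrable_mult_right integrable_gaussian_quadratic) simp
  then show ?thesis
    by (simp add: gauss_kernel_def mult.assoc)
qed

lemma integrable_gauss_kernel:
  assumes "0 < a"
  shows "integrable lborel (gauss_kernel a :: 'a::euclidean_space \<Rightarrow> real)"
    and "integrable lborel (gauss_kernel' a :: 'a \<Rightarrow> real)"
    and "integrable lborel (gauss_kernel'' a :: 'a \<Rightarrow> real)"
proof -
  let ?n = "real DIM('a)"
  show "integrable lborel (gauss_kernel a :: 'a \<Rightarrow> real)"
    using integrable_gauss_kernel_quadratic[OF assms, of 1 0 0] by simp
  show "integrable lborel (gauss_kernel' a :: 'a \<Rightarrow> real)"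
    using integrable_gauss_kernel_quadratic[OF assms, of "?n / (2 * a)" "- 1 / 2" 0]
    by (simp add: gauss_kernel'_def[abs_def])
  have eq: "gauss_kernel'' a = (\<lambda>y::'a. gauss_kernel a y *
      (((?n / (2 * a))\<^sup>2 - ?n / (2 * a\<^sup>2)) + (- ?n / (2 * a)) * (norm y)\<^sup>2 + 1 / 4 * ((norm y)\<^sup>2)\<^sup>2))"
    by (simp add: gauss_kernel''_def[abs_def] power2_diff power_divide algebra_simps)
  show "integrable lborel (gauss_kernel'' a :: 'a \<Rightarrow> real)"
    unfolding eq by (rule integrable_gauss_kernel_quadratic[OF assms])
qed

lemma gauss_kernel_scaleR_sqrt:
  fixes y :: "'a::euclidean_space"
  assumes "0 < a"
  shows "gauss_kernel a y = a powr (real DIM('a) / 2) * gauss_kernel 1 (sqrt a *\<^sub>R y)"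
    and "gauss_kernel' a y = a powr (real DIM('a) / 2) * gauss_kernel' 1 (sqrt a *\<^sub>R y) / a"
    and "gauss_kernel'' a y = a powr (real DIM('a) / 2) * gauss_kernel'' 1 (sqrt a *\<^sub>R y) / a\<^sup>2"
proof -
  have n: "(norm (sqrt a *\<^sub>R y))\<^sup>2 = a * (norm y)\<^sup>2"
    using assms by (simp add: power_mult_distrib)
  show g: "gauss_kernel a y = a powr (real DIM('a) / 2) * gauss_kernel 1 (sqrt a *\<^sub>R y)"
    unfolding gauss_kernel_def n by simp
  show "gauss_kernel' a y = a powr (real DIM('a) / 2) * gauss_kernel' 1 (sqrt a *\<^sub>R y) / a"
    unfolding gauss_kernel'_def g n using assms by (simp add: field_simps)
  show "gauss_kernel'' a y = a powr (real DIM('a) / 2) * gauss_kernel'' 1 (sqrt a *\<^sub>R y) / a\<^sup>2"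
    unfolding gauss_kernel''_def g n using assms by (simp add: field_simps power2_eq_square)
qed

lemma gauss_kernel_le:
  fixes y :: "'a::euclidean_space"
  assumes "0 < b" "b \<le> t"
  shows "gauss_kernel t y \<le> (t / b) powr (real DIM('a) / 2) * gauss_kernel b y"
proof -
  let ?c = "(2 * pi) powr (- real DIM('a) / 2)"
  have "gauss_kernel t y \<le> ?c * t powr (real DIM('a) / 2) * exp (- (b * (norm y)\<^sup>2) / 2)"
    unfolding gauss_kernel_def using assms by (intro mult_left_mono) (auto intro: mult_right_mono)
  also have "\<dots> = (t / b) powr (real DIM('a) / 2) * gauss_kernel b y"
    using assms by (simp add: gauss_kernel_def powr_divide)
  finally show ?thesis .
qed

lemma mem_ball_half_radius:
  fixes a t :: real
  assumes "t \<in> ball a (a / 2)"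
  shows "a / 2 < t" "t < 2 * a"
  using assms by (auto simp: dist_real_def abs_if split: if_splits)

lemma gauss_kernel_le_near:
  fixes y :: "'a::euclidean_space"
  assumes "t \<in> ball a (a / 2)"
  shows "gauss_kernel t y \<le> 2 ^ DIM('a) * gauss_kernel (a / 2) y"
proof -
  note t = mem_ball_half_radius[OF assms]
  have "gauss_kernel t y \<le> (t / (a / 2)) powr (real DIM('a) / 2) * gauss_kernel (a / 2) y"
    using t by (intro gauss_kernel_le) auto
  also have "\<dots> \<le> 4 powr (real DIM('a) / 2) * gauss_kernel (a / 2) y"
    using t by (intro mult_right_mono powr_mono2 gauss_kernel_nonneg) (auto simp: field_simps)
  also have "4 powr (real DIM('a) / 2) = (2 :: real) ^ DIM('a)"
    by (simp add: powr_powr powr_realpow[symmetric] flip: powr_numeral)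
  finally show ?thesis .
qed

lemma abs_dim_factor_le:
  fixes n a t s :: real
  assumes "0 \<le> n" "0 \<le> s" "0 < a" "a / 2 < t"
  shows "\<bar>n / (2 * t) - s / 2\<bar> \<le> n / a + s / 2"
proof -
  have "n / (2 * t) \<le> n / a"
    using assms by (intro divide_left_mono) auto
  then show ?thesis
    using assms by (intro abs_triangle_ineq4[THEN order_trans]) auto
qed

lemma abs_gauss_kernel'_le:
  fixes y :: "'a::euclidean_space"
  assumes "t \<in> ball a (a / 2)"
  shows "\<bar>gauss_kernel' t y\<bar> \<le> 2 ^ DIM('a) * gauss_kernel (a / 2) y * (real DIM('a) / a + (norm y)\<^sup>2 / 2)"
proof -
  note t = mem_ball_half_radius[OF assms]
  have "\<bar>real DIM('a) / (2 * t) - (norm y)\<^sup>2 / 2\<bar> \<le> real DIM('a) / a + (norm y)\<^sup>2 / 2"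
    using t by (intro abs_dim_factor_le) auto
  with gauss_kernel_le_near[OF assms, of y] show ?thesis
    unfolding gauss_kernel'_def abs_mult abs_of_nonneg[OF gauss_kernel_nonneg]
    by (intro mult_mono) (auto simp: gauss_kernel_nonneg)
qed

lemma abs_gauss_kernel''_le:
  fixes y :: "'a::euclidean_space"
  assumes "t \<in> ball a (a / 2)"
  shows "\<bar>gauss_kernel'' t y\<bar>
    \<le> 2 ^ DIM('a) * gauss_kernel (a / 2) y * ((real DIM('a) / a + (norm y)\<^sup>2 / 2)\<^sup>2 + 2 * real DIM('a) / a\<^sup>2)"
proof -
  let ?n = "real DIM('a)"
  note t = mem_ball_half_radius[OF assms]
  have "\<bar>?n / (2 * t) - (norm y)\<^sup>2 / 2\<bar> \<le> ?n / a + (norm y)\<^sup>2 / 2"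
    using t by (intro abs_dim_factor_le) auto
  then have "(?n / (2 * t) - (norm y)\<^sup>2 / 2)\<^sup>2 \<le> (?n / a + (norm y)\<^sup>2 / 2)\<^sup>2"
    by (simp add: abs_le_square_iff[symmetric] abs_of_nonneg)
  moreover have "?n / (2 * t\<^sup>2) \<le> 2 * ?n / a\<^sup>2"
  proof -
    have "(a / 2)\<^sup>2 \<le> t\<^sup>2"
      using t by (intro power_mono) auto
    then show ?thesis
      using t by (simp add: field_simps power2_eq_square mult_left_mono)
  qed
  ultimately have "\<bar>(?n / (2 * t) - (norm y)\<^sup>2 / 2)\<^sup>2 - ?n / (2 * t\<^sup>2)\<bar>
      \<le> (?n / a + (norm y)\<^sup>2 / 2)\<^sup>2 + 2 * ?n / a\<^sup>2"
    by (intro abs_triangle_ineq4[THEN order_trans]) auto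
  with gauss_kernel_le_near[OF assms, of y] show ?thesis
    unfolding gauss_kernel''_def abs_mult abs_of_nonneg[OF gauss_kernel_nonneg]
    by (intro mult_mono) (auto simp: gauss_kernel_nonneg)
qed

definition gauss_mass :: "'a::euclidean_space set \<Rightarrow> real \<Rightarrow> real" where
  "gauss_mass A a = (LINT y|lborel. indicator A y * gauss_kernel a y)"

definition gauss_mass' :: "'a::euclidean_space set \<Rightarrow> real \<Rightarrow> real" where
  "gauss_mass' A a = (LINT y|lborel. indicator A y * gauss_kernel' a y)"

definition gauss_mass'' :: "'a::euclidean_space set \<Rightarrow> real \<Rightarrow> real" where
  "gauss_mass'' A a = (LINT y|lborel. indicator A y * gauss_kernel'' a y)"

lemma measurable_gauss_mass [measurable]:
  assumes "A \<in> sets lborel"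
  shows "gauss_mass A \<in> borel_measurable borel"
    and "gauss_mass' A \<in> borel_measurable borel"
    and "gauss_mass'' A \<in> borel_measurable borel"
  unfolding gauss_mass_def[abs_def] gauss_mass'_def[abs_def] gauss_mass''_def[abs_def]
  using assms by measurable

lemma DERIV_gauss_mass:
  fixes A :: "'a::euclidean_space set"
  assumes A: "A \<in> sets lborel" and a: "0 < a"
  shows "(gauss_mass A has_real_derivative gauss_mass' A a) (at a)"
proof -
  define B where "B y = 2 ^ DIM('a) * gauss_kernel (a / 2) y * (real DIM('a) / a + (norm y)\<^sup>2 / 2)"
    for y :: 'a
  have eq: "B = (\<lambda>y. gauss_kernel (a / 2) y *
      (2 ^ DIM('a) * real DIM('a) / a + 2 ^ DIM('a) / 2 * (norm y)\<^sup>2 + 0 * ((norm y)\<^sup>2)\<^sup>2))"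
    by (simp add: B_def fun_eq_iff algebra_simps)
  have int_B: "integrable lborel B"
    unfolding eq by (rule integrable_gauss_kernel_quadratic) (use a in simp)
  show ?thesis
    unfolding gauss_mass_def[abs_def] gauss_mass'_def
  proof (rule DERIV_integral_dominated[where e = "a / 2" and B = B])
    fix t y assume t: "t \<in> ball a (a / 2)"
    show "((\<lambda>t. indicator A y * gauss_kernel t y) has_real_derivative indicator A y * gauss_kernel' t y) (at t)"
      using mem_ball_half_radius[OF t] by (intro DERIV_cmult DERIV_gauss_kernel) auto
    show "\<bar>indicator A y * gauss_kernel' t y\<bar> \<le> B y"
      using abs_gauss_kernel'_le[OF t, of y] abs_ge_zero[of "gauss_kernel' t y"]
      by (auto simp: B_def indicator_def)
  next
    show "integrable lborel (\<lambda>y. indicator A y * gauss_kernel a y)"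
      using integrable_mult_indicator[OF A integrable_gauss_kernel(1)[OF a]] by simp
  qed (use A a int_B in auto)
qed

lemma DERIV_gauss_mass':
  fixes A :: "'a::euclidean_space set"
  assumes A: "A \<in> sets lborel" and a: "0 < a"
  shows "(gauss_mass' A has_real_derivative gauss_mass'' A a) (at a)"
proof -
  let ?n = "real DIM('a)"
  define B where "B y = 2 ^ DIM('a) * gauss_kernel (a / 2) y * ((?n / a + (norm y)\<^sup>2 / 2)\<^sup>2 + 2 * ?n / a\<^sup>2)"
    for y :: 'a
  have eq: "B = (\<lambda>y. gauss_kernel (a / 2) y * (2 ^ DIM('a) * ((?n / a)\<^sup>2 + 2 * ?n / a\<^sup>2)
      + 2 ^ DIM('a) * (?n / a) * (norm y)\<^sup>2 + 2 ^ DIM('a) / 4 * ((norm y)\<^sup>2)\<^sup>2))"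
    by (simp add: B_def fun_eq_iff power2_sum power_divide algebra_simps)
  have int_B: "integrable lborel B"
    unfolding eq by (rule integrable_gauss_kernel_quadratic) (use a in simp)
  show ?thesis
    unfolding gauss_mass'_def[abs_def] gauss_mass''_def
  proof (rule DERIV_integral_dominated[where e = "a / 2" and B = B])
    fix t y assume t: "t \<in> ball a (a / 2)"
    show "((\<lambda>t. indicator A y * gauss_kernel' t y) has_real_derivative indicator A y * gauss_kernel'' t y) (at t)"
      using mem_ball_half_radius[OF t] by (intro DERIV_cmult DERIV_gauss_kernel') auto
    show "\<bar>indicator A y * gauss_kernel'' t y\<bar> \<le> B y"
      using abs_gauss_kernel''_le[OF t, of y] abs_ge_zero[of "gauss_kernel'' t y"]
      by (auto simp: B_def indicator_def)
  next
    show "integrable lborel (\<lambda>y. indicator A y * gauss_kernel' a y)"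
      using integrable_mult_indicator[OF A integrable_gauss_kernel(2)[OF a]] by simp
  qed (use A a int_B in auto)
qed

lemma abs_integral_indicator_le:
  fixes f :: "'b \<Rightarrow> real"
  assumes "A \<in> sets M" "integrable M f"
  shows "\<bar>LINT y|M. indicator A y * f y\<bar> \<le> (LINT y|M. \<bar>f y\<bar>)"
proof -
  have "\<bar>LINT y|M. indicator A y * f y\<bar> \<le> (LINT y|M. \<bar>indicator A y * f y\<bar>)"
    by (rule integral_abs_bound)
  also have "\<dots> \<le> (LINT y|M. \<bar>f y\<bar>)"
    using integrable_mult_indicator[OF assms] assms
    by (intro integral_mono integrable_abs) (auto simp: indicator_def)
  finally show ?thesis .
qed

lemma integral_abs_scaleR_sqrt:
  fixes F G :: "'a::euclidean_space \<Rightarrow> real"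
  assumes "0 < a" "F \<in> borel_measurable borel"
    and "\<And>y. G y = a powr (real DIM('a) / 2) * F (sqrt a *\<^sub>R y) / c"
  shows "(LINT y|lborel. \<bar>G y\<bar>) = (LINT z|lborel. \<bar>F z\<bar>) / \<bar>c\<bar>"
proof -
  have "(LINT y|lborel. \<bar>G y\<bar>) = (LINT y|lborel. a powr (real DIM('a) / 2) * \<bar>F (sqrt a *\<^sub>R y)\<bar>) / \<bar>c\<bar>"
    using assms(3) by (simp add: abs_mult abs_divide)
  also have "\<dots> = (LINT z|lborel. \<bar>F z\<bar>) / \<bar>c\<bar>"
    using assms(1,2) by (subst lborel_integral_scaleR_sqrt) auto
  finally show ?thesis .
qed

lemma abs_gauss_mass_le:
  fixes A :: "'a::euclidean_space set"
  assumes A: "A \<in> sets lborel" and a: "0 < a"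
  shows "\<bar>gauss_mass A a\<bar> \<le> (LINT z|lborel. \<bar>gauss_kernel 1 (z::'a)\<bar>)"
    and "\<bar>gauss_mass' A a\<bar> \<le> (LINT z|lborel. \<bar>gauss_kernel' 1 (z::'a)\<bar>) / a"
    and "\<bar>gauss_mass'' A a\<bar> \<le> (LINT z|lborel. \<bar>gauss_kernel'' 1 (z::'a)\<bar>) / a\<^sup>2"
proof -
  have "(LINT y|lborel. \<bar>gauss_kernel a (y::'a)\<bar>) = (LINT z|lborel. \<bar>gauss_kernel 1 (z::'a)\<bar>) / \<bar>1\<bar>"
    by (rule integral_abs_scaleR_sqrt[OF a]) (simp_all add: gauss_kernel_scaleR_sqrt(1)[OF a])
  with abs_integral_indicator_le[OF A integrable_gauss_kernel(1)[OF a]]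
  show "\<bar>gauss_mass A a\<bar> \<le> (LINT z|lborel. \<bar>gauss_kernel 1 (z::'a)\<bar>)"
    by (simp add: gauss_mass_def)
  have "(LINT y|lborel. \<bar>gauss_kernel' a (y::'a)\<bar>) = (LINT z|lborel. \<bar>gauss_kernel' 1 (z::'a)\<bar>) / \<bar>a\<bar>"
    by (rule integral_abs_scaleR_sqrt[OF a]) (simp_all add: gauss_kernel_scaleR_sqrt(2)[OF a])
  with abs_integral_indicator_le[OF A integrable_gauss_kernel(2)[OF a]] a
  show "\<bar>gauss_mass' A a\<bar> \<le> (LINT z|lborel. \<bar>gauss_kernel' 1 (z::'a)\<bar>) / a"
    by (simp add: gauss_mass'_def)
  have "(LINT y|lborel. \<bar>gauss_kernel'' a (y::'a)\<bar>) = (LINT z|lborel. \<bar>gauss_kernel'' 1 (z::'a)\<bar>) / \<bar>a\<^sup>2\<bar>"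
    by (rule integral_abs_scaleR_sqrt[OF a]) (simp_all add: gauss_kernel_scaleR_sqrt(3)[OF a])
  with abs_integral_indicator_le[OF A integrable_gauss_kernel(3)[OF a]]
  show "\<bar>gauss_mass'' A a\<bar> \<le> (LINT z|lborel. \<bar>gauss_kernel'' 1 (z::'a)\<bar>) / a\<^sup>2"
    by (simp add: gauss_mass''_def)
qed

definition gauss_dilation_density :: "real \<Rightarrow> 'a::euclidean_space \<Rightarrow> real" where
  "gauss_dilation_density a y = gauss_kernel a y * (real DIM('a) - 2 - a * (norm y)\<^sup>2) / (4 * a\<^sup>2)"

definition dilation_integral :: "'a::euclidean_space set \<Rightarrow> real \<Rightarrow> real \<Rightarrow> real" where
  "dilation_integral A a l = (LINT z|lborel. indicator A ((1 / l) *\<^sub>R z) * gauss_dilation_density a z)"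

lemma measurable_gauss_dilation_density [measurable]: "gauss_dilation_density a \<in> borel_measurable borel"
  unfolding gauss_dilation_density_def[abs_def] by measurable

lemma gauss_dilation_density_eq:
  assumes "0 < a"
  shows "gauss_dilation_density a y = (a * gauss_kernel' a y - gauss_kernel a y) / (2 * a\<^sup>2)"
  using assms by (simp add: gauss_dilation_density_def gauss_kernel'_def field_simps power2_eq_square)

lemma integrable_gauss_dilation_density:
  assumes "0 < a"
  shows "integrable lborel (gauss_dilation_density a :: 'a::euclidean_space \<Rightarrow> real)"
proof -
  have "gauss_dilation_density a = (\<lambda>y::'a. (a * gauss_kernel' a y - gauss_kernel a y) / (2 * a\<^sup>2))"
    using gauss_dilation_density_eq[OF assms] by auto
  then show ?thesis
    by (simp only:) (intro integrable_divide Bochner_Integration.integrable_diff integrable_mult_right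
        integrable_gauss_kernel assms)
qed

lemma gauss_dilation_density_scaleR:
  fixes y :: "'a::euclidean_space"
  assumes a: "0 < a" and l: "0 < l"
  shows "l ^ DIM('a) * gauss_dilation_density a (l *\<^sub>R y) = l ^ 4 * gauss_dilation_density (a * l\<^sup>2) y"
proof -
  have "(l\<^sup>2) powr (real DIM('a) / 2) = l ^ DIM('a)"
    using l by (simp add: powr_powr powr_realpow flip: powr_numeral)
  then have "(a * l\<^sup>2) powr (real DIM('a) / 2) = a powr (real DIM('a) / 2) * l ^ DIM('a)"
    using a l by (simp add: powr_mult)
  moreover have "(norm (l *\<^sub>R y))\<^sup>2 = l\<^sup>2 * (norm y)\<^sup>2"
    using l by (simp add: power_mult_distrib)
  moreover have "(a * l\<^sup>2)\<^sup>2 = a\<^sup>2 * l ^ 4"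
    by (simp add: power_mult_distrib flip: power_mult)
  ultimately show ?thesis
    using a l by (simp add: gauss_dilation_density_def gauss_kernel_def field_simps)
qed

lemma integrable_dilation_integrand:
  fixes A :: "'a::euclidean_space set"
  assumes "A \<in> sets lborel" "0 < a"
  shows "integrable lborel (\<lambda>z. indicator A ((1 / l) *\<^sub>R z) * gauss_dilation_density a z)"
  by (rule Bochner_Integration.integrable_bound[OF integrable_gauss_dilation_density[OF assms(2)]])
    (use assms(1) in \<open>auto simp: indicator_def\<close>)

text \<open>Substituting \<open>z = l y\<close> turns the dilation integral into Gaussian masses at precision \<open>a l\<^sup>2\<close>.\<close>

lemma dilation_integral_eq:
  fixes A :: "'a::euclidean_space set"
  assumes A: "A \<in> sets lborel" and a: "0 < a" and l: "0 < l"
  shows "dilation_integral A a l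
    = (a * l\<^sup>2 * gauss_mass' A (a * l\<^sup>2) - gauss_mass A (a * l\<^sup>2)) / (2 * a\<^sup>2)"
proof -
  let ?b = "a * l\<^sup>2"
  have b: "0 < ?b" using a l by simp
  have "dilation_integral A a l = \<bar>l\<bar> ^ DIM('a) * (LINT y|lborel.
      indicator A ((1 / l) *\<^sub>R (0 + l *\<^sub>R y)) * gauss_dilation_density a (0 + l *\<^sub>R y))"
    unfolding dilation_integral_def using l A by (intro lborel_integral_affine_euclidean) auto
  also have "\<dots> = (LINT y|lborel. indicator A y * (l ^ DIM('a) * gauss_dilation_density a (l *\<^sub>R y)))"
    using l by (subst integral_mult_right_zero[symmetric]) (simp add: mult.left_commute)
  also have "\<dots> = l ^ 4 * (LINT y|lborel. indicator A y * gauss_dilation_density ?b y)"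
    by (subst integral_mult_right_zero[symmetric]) (simp add: gauss_dilation_density_scaleR[OF a l] mult.left_commute)
  also have "(LINT y|lborel. indicator A y * gauss_dilation_density ?b y)
      = (LINT y|lborel. (?b * (indicator A y * gauss_kernel' ?b y) - indicator A y * gauss_kernel ?b y)
          / (2 * ?b\<^sup>2))"
    by (simp add: gauss_dilation_density_eq[OF b] algebra_simps)
  also have "\<dots> = (?b * gauss_mass' A ?b - gauss_mass A ?b) / (2 * ?b\<^sup>2)"
    using integrable_mult_indicator[OF A integrable_gauss_kernel(1)[OF b]]
      integrable_mult_indicator[OF A integrable_gauss_kernel(2)[OF b]]
    by (simp add: gauss_mass'_def gauss_mass_def)
  also have "?b\<^sup>2 = a\<^sup>2 * l ^ 4"
    by (simp add: power_mult_distrib flip: power_mult)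
  finally show ?thesis
    using l by simp
qed

lemma DERIV_dilation_integral:
  fixes A :: "'a::euclidean_space set"
  assumes A: "A \<in> sets lborel" and a: "0 < a"
  shows "(dilation_integral A a has_real_derivative gauss_mass'' A a) (at 1)"
proof -
  have sq: "((\<lambda>l. a * l\<^sup>2) has_real_derivative 2 * a) (at 1)"
    by (auto intro!: derivative_eq_intros)
  have m: "((\<lambda>l. gauss_mass A (a * l\<^sup>2)) has_real_derivative gauss_mass' A a * (2 * a)) (at 1)"
    using DERIV_chain2[OF DERIV_gauss_mass[OF A, of "a * 1\<^sup>2"] sq] a by simp
  have m': "((\<lambda>l. gauss_mass' A (a * l\<^sup>2)) has_real_derivative gauss_mass'' A a * (2 * a)) (at 1)"
    using DERIV_chain2[OF DERIV_gauss_mass'[OF A, of "a * 1\<^sup>2"] sq] a by simp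
  have "((\<lambda>l. (a * l\<^sup>2 * gauss_mass' A (a * l\<^sup>2) - gauss_mass A (a * l\<^sup>2)) / (2 * a\<^sup>2))
      has_real_derivative (a * 1\<^sup>2 * (gauss_mass'' A a * (2 * a)) + 2 * a * gauss_mass' A (a * 1\<^sup>2)
        - gauss_mass' A a * (2 * a)) / (2 * a\<^sup>2)) (at 1)"
    by (intro DERIV_cdivide DERIV_diff DERIV_mult' sq m m')
  then have "((\<lambda>l. (a * l\<^sup>2 * gauss_mass' A (a * l\<^sup>2) - gauss_mass A (a * l\<^sup>2)) / (2 * a\<^sup>2))
      has_real_derivative gauss_mass'' A a) (at 1)"
    using a by (simp add: field_simps power2_eq_square)
  then show ?thesis
    by (rule has_field_derivative_transform_within_open[where S = "{0<..}"])
      (use dilation_integral_eq[OF A a] in auto)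
qed

lemma dilation_integral_diff:
  fixes A :: "'a::euclidean_space set"
  assumes A: "A \<in> sets lborel" and a: "0 < a"
  shows "dilation_integral A a l - dilation_integral A a 1
    = (LINT z|lborel. (indicator A ((1 / l) *\<^sub>R z) - indicator A z) * gauss_dilation_density a z)"
proof -
  have "dilation_integral A a l - dilation_integral A a 1
      = (LINT z|lborel. indicator A ((1 / l) *\<^sub>R z) * gauss_dilation_density a z
          - indicator A ((1 / 1) *\<^sub>R z) * gauss_dilation_density a z)"
    unfolding dilation_integral_def
    by (rule Bochner_Integration.integral_diff[symmetric]) (rule integrable_dilation_integrand[OF A a])+
  then show ?thesis
    by (simp add: left_diff_distrib)
qed

lemma DERIV_nonpos_if_le_right:
  fixes f :: "real \<Rightarrow> real"
  assumes "(f has_real_derivative D) (at x)" and "\<And>y. x < y \<Longrightarrow> f y \<le> f x"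
  shows "D \<le> 0"
proof (rule ccontr)
  assume "\<not> D \<le> 0"
  then obtain d where d: "0 < d" "\<And>h. 0 < h \<Longrightarrow> h < d \<Longrightarrow> f x < f (x + h)"
    using DERIV_pos_inc_right[OF assms(1)] by force
  from d(2)[of "d / 2"] d(1) have "f x < f (x + d / 2)" by simp
  with assms(2)[of "x + d / 2"] d(1) show False by simp
qed

lemma DERIV_nonneg_if_le_left:
  fixes f :: "real \<Rightarrow> real"
  assumes "(f has_real_derivative D) (at x)" and "c < x" and "\<And>y. c < y \<Longrightarrow> y < x \<Longrightarrow> f y \<le> f x"
  shows "0 \<le> D"
proof (rule ccontr)
  assume "\<not> 0 \<le> D"
  then obtain d where d: "0 < d" "\<And>h. 0 < h \<Longrightarrow> h < d \<Longrightarrow> f x < f (x - h)"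
    using DERIV_neg_dec_left[OF assms(1)] by force
  define h where "h = min (d / 2) ((x - c) / 2)"
  have "0 < h" "h < d"
    using d(1) assms(2) by (auto simp: h_def min_less_iff_disj)
  moreover have "h \<le> (x - c) / 2"
    unfolding h_def by (rule min.cobounded2)
  ultimately have "f x < f (x - h)" "f (x - h) \<le> f x"
    using d(2) assms(2) assms(3)[of "x - h"] by auto
  then show False by simp
qed

lemma gauss_dilation_density_nonpos:
  "real DIM('a) - 2 \<le> a * (norm z)\<^sup>2 \<Longrightarrow> gauss_dilation_density a (z::'a::euclidean_space) \<le> 0"
  unfolding gauss_dilation_density_def
  by (intro divide_nonpos_nonneg mult_nonneg_nonpos gauss_kernel_nonneg) auto

lemma gauss_dilation_density_nonneg:
  "a * (norm z)\<^sup>2 \<le> real DIM('a) - 2 \<Longrightarrow> 0 \<le> gauss_dilation_density a (z::'a::euclidean_space)"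
  unfolding gauss_dilation_density_def
  by (intro divide_nonneg_nonneg mult_nonneg_nonneg gauss_kernel_nonneg) auto

lemma center_convex_add_scaleR:
  assumes "center_convex c \<Omega>" "c + y \<in> \<Omega>" "0 \<le> \<mu>" "\<mu> \<le> 1"
  shows "c + \<mu> *\<^sub>R y \<in> \<Omega>"
proof -
  have "c + \<mu> *\<^sub>R y \<in> closed_segment c (c + y)"
    unfolding closed_segment_def using assms(3,4)
    by (intro CollectI exI[of _ \<mu>]) (simp add: algebra_simps)
  with assms(1,2) show ?thesis
    unfolding center_convex_def by blast
qed

lemma gauss_mass''_nonpos:
  fixes A :: "'a::euclidean_space set"
  assumes A: "A \<in> sets lborel" and a: "0 < a" and star: "center_convex 0 A"
    and outside: "\<And>z. z \<notin> A \<Longrightarrow> real DIM('a) - 2 \<le> a * (norm z)\<^sup>2"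
  shows "gauss_mass'' A a \<le> 0"
proof (rule DERIV_nonpos_if_le_right[OF DERIV_dilation_integral[OF A a]])
  fix l :: real assume l: "1 < l"
  have "(LINT z|lborel. (indicator A ((1 / l) *\<^sub>R z) - indicator A z) * gauss_dilation_density a z)
      \<le> (LINT (z::'a)|lborel. 0)"
  proof (rule Bochner_Integration.integral_mono)
    show "integrable lborel (\<lambda>z. (indicator A ((1 / l) *\<^sub>R z) - indicator A z) * gauss_dilation_density a (z::'a))"
      using integrable_dilation_integrand[OF A a, of l] integrable_dilation_integrand[OF A a, of 1]
      by (simp add: left_diff_distrib)
    fix z :: 'a
    show "(indicator A ((1 / l) *\<^sub>R z) - indicator A z) * gauss_dilation_density a z \<le> 0"
    proof (cases "z \<in> A")
      case True
      then have "(1 / l) *\<^sub>R z \<in> A"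
        using center_convex_add_scaleR[OF star, of z "1 / l"] l by simp
      with True show ?thesis by simp
    next
      case False
      then show ?thesis
        using gauss_dilation_density_nonpos[OF outside[OF False]]
        by (simp add: indicator_def mult_nonneg_nonpos)
    qed
  qed simp
  then show "dilation_integral A a l \<le> dilation_integral A a 1"
    using dilation_integral_diff[OF A a, of l] by simp
qed

lemma gauss_mass''_nonneg:
  fixes A :: "'a::euclidean_space set"
  assumes A: "A \<in> sets lborel" and a: "0 < a" and star: "center_convex 0 A"
    and inside: "\<And>z \<mu>. z \<in> A \<Longrightarrow> 1 < \<mu> \<Longrightarrow> \<mu> *\<^sub>R z \<notin> A \<Longrightarrow> a * (norm z)\<^sup>2 \<le> real DIM('a) - 2"
  shows "0 \<le> gauss_mass'' A a"
proof (rule DERIV_nonneg_if_le_left[OF DERIV_dilation_integral[OF A a], of 0])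
  fix l :: real assume l: "0 < l" "l < 1"
  have "(LINT z|lborel. (indicator A ((1 / l) *\<^sub>R z) - indicator A z) * gauss_dilation_density a z)
      \<le> (LINT (z::'a)|lborel. 0)"
  proof (rule Bochner_Integration.integral_mono)
    show "integrable lborel (\<lambda>z. (indicator A ((1 / l) *\<^sub>R z) - indicator A z) * gauss_dilation_density a (z::'a))"
      using integrable_dilation_integrand[OF A a, of l] integrable_dilation_integrand[OF A a, of 1]
      by (simp add: left_diff_distrib)
    fix z :: 'a
    show "(indicator A ((1 / l) *\<^sub>R z) - indicator A z) * gauss_dilation_density a z \<le> 0"
    proof (cases "(1 / l) *\<^sub>R z \<in> A")
      case True
      then have "z \<in> A"
        using center_convex_add_scaleR[OF star, of "(1 / l) *\<^sub>R z" l] l by simp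
      with True show ?thesis by simp
    next
      case False
      moreover have "0 \<le> gauss_dilation_density a z" if "z \<in> A"
        using inside[OF that _ False] l by (intro gauss_dilation_density_nonneg) simp
      ultimately show ?thesis
        by (auto simp: indicator_def)
    qed
  qed simp
  then show "dilation_integral A a l \<le> dilation_integral A a 1"
    using dilation_integral_diff[OF A a, of l] by simp
qed simp

text \<open>The factor \<open>\<sigma>\<^sup>-\<^sup>2\<^sup>k\<close> is what \<open>k\<close> differentiations in \<open>q\<close> produce.\<close>

definition scale_mixture :: "(real \<Rightarrow> real) \<Rightarrow> nat \<Rightarrow> (real \<Rightarrow> real) \<Rightarrow> real \<Rightarrow> real" where
  "scale_mixture f k h q = (LINT \<sigma>|lborel. indicator {0<..} \<sigma> * f \<sigma> * (h (q / \<sigma>\<^sup>2) / (\<sigma>\<^sup>2) ^ k))"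

lemma scale_mixture_integrand_bound:
  fixes h :: "real \<Rightarrow> real"
  assumes f_nonneg: "\<And>\<sigma>. 0 \<le> f \<sigma>" and bound: "\<And>a. 0 < a \<Longrightarrow> \<bar>h a\<bar> \<le> C / a ^ k" and "0 < t"
  shows "\<bar>indicator {0<..} \<sigma> * f \<sigma> * (h (t / \<sigma>\<^sup>2) / (\<sigma>\<^sup>2) ^ k)\<bar> \<le> f \<sigma> * (C / t ^ k)"
proof (cases "0 < \<sigma>")
  case True
  have "\<bar>h (t / \<sigma>\<^sup>2)\<bar> / (\<sigma>\<^sup>2) ^ k \<le> C / (t / \<sigma>\<^sup>2) ^ k / (\<sigma>\<^sup>2) ^ k"
    using bound[of "t / \<sigma>\<^sup>2"] True assms(3) by (intro divide_right_mono) auto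
  then have "\<bar>h (t / \<sigma>\<^sup>2) / (\<sigma>\<^sup>2) ^ k\<bar> \<le> C / (t / \<sigma>\<^sup>2) ^ k / (\<sigma>\<^sup>2) ^ k"
    by (simp add: abs_divide)
  also have "\<dots> = C / t ^ k"
    using True by (simp add: power_divide)
  finally have bound_h: "\<bar>h (t / \<sigma>\<^sup>2) / (\<sigma>\<^sup>2) ^ k\<bar> \<le> C / t ^ k" .
  have "\<bar>indicator {0<..} \<sigma> * f \<sigma> * (h (t / \<sigma>\<^sup>2) / (\<sigma>\<^sup>2) ^ k)\<bar>
      = f \<sigma> * \<bar>h (t / \<sigma>\<^sup>2) / (\<sigma>\<^sup>2) ^ k\<bar>"
    unfolding abs_mult using True f_nonneg[of \<sigma>] by simp
  also have "\<dots> \<le> f \<sigma> * (C / t ^ k)"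
    by (rule mult_left_mono[OF bound_h f_nonneg])
  finally show ?thesis .
next
  case False
  have "0 \<le> C"
    using bound[of 1] by simp
  with False f_nonneg[of \<sigma>] assms(3) show ?thesis by simp
qed

lemma integrable_scale_mixture_integrand:
  fixes h :: "real \<Rightarrow> real"
  assumes f_nonneg: "\<And>\<sigma>. 0 \<le> f \<sigma>" and f_int: "integrable lborel f"
    and h_meas: "h \<in> borel_measurable borel" and bound: "\<And>a. 0 < a \<Longrightarrow> \<bar>h a\<bar> \<le> C / a ^ k"
    and q: "0 < q"
  shows "integrable lborel (\<lambda>\<sigma>. indicator {0<..} \<sigma> * f \<sigma> * (h (q / \<sigma>\<^sup>2) / (\<sigma>\<^sup>2) ^ k))"
proof (rule Bochner_Integration.integrable_bound[OF integrable_mult_left[OF f_int, of "C / q ^ k"]])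
  have [measurable]: "f \<in> borel_measurable borel" "h \<in> borel_measurable borel"
    using f_int h_meas by auto
  show "(\<lambda>\<sigma>. indicator {0<..} \<sigma> * f \<sigma> * (h (q / \<sigma>\<^sup>2) / (\<sigma>\<^sup>2) ^ k)) \<in> borel_measurable lborel"
    by measurable
  show "AE \<sigma> in lborel. norm (indicator {0<..} \<sigma> * f \<sigma> * (h (q / \<sigma>\<^sup>2) / (\<sigma>\<^sup>2) ^ k)) \<le> norm (f \<sigma> * (C / q ^ k))"
    unfolding real_norm_def
    by (intro AE_I2 order_trans[OF scale_mixture_integrand_bound[OF f_nonneg bound q] abs_ge_self])
qed

lemma DERIV_scale_mixture_integrand:
  fixes h h' :: "real \<Rightarrow> real"
  assumes deriv: "\<And>a. 0 < a \<Longrightarrow> (h has_real_derivative h' a) (at a)" and "0 < t"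
  shows "((\<lambda>t. indicator {0<..} \<sigma> * f \<sigma> * (h (t / \<sigma>\<^sup>2) / (\<sigma>\<^sup>2) ^ k)) has_real_derivative
    indicator {0<..} \<sigma> * f \<sigma> * (h' (t / \<sigma>\<^sup>2) / (\<sigma>\<^sup>2) ^ Suc k)) (at t)"
proof (cases "0 < \<sigma>")
  case True
  have "((\<lambda>t. h (t / \<sigma>\<^sup>2)) has_real_derivative h' (t / \<sigma>\<^sup>2) * (1 / \<sigma>\<^sup>2)) (at t)"
    using True assms(2) by (intro DERIV_chain2[OF deriv] DERIV_cdivide DERIV_ident) auto
  from DERIV_cmult[OF DERIV_cdivide[OF this, of "(\<sigma>\<^sup>2) ^ k"], of "indicator {0<..} \<sigma> * f \<sigma>"]
  show ?thesis
    by (rule DERIV_cong) (simp add: field_simps)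
qed simp

lemma DERIV_scale_mixture:
  fixes h h' :: "real \<Rightarrow> real"
  assumes f_nonneg: "\<And>\<sigma>. 0 \<le> f \<sigma>" and f_int: "integrable lborel f"
    and h_meas: "h \<in> borel_measurable borel" and h'_meas: "h' \<in> borel_measurable borel"
    and deriv: "\<And>a. 0 < a \<Longrightarrow> (h has_real_derivative h' a) (at a)"
    and bound: "\<And>a. 0 < a \<Longrightarrow> \<bar>h a\<bar> \<le> C / a ^ k"
    and bound': "\<And>a. 0 < a \<Longrightarrow> \<bar>h' a\<bar> \<le> C' / a ^ Suc k"
    and q: "0 < q"
  shows "(scale_mixture f k h has_real_derivative scale_mixture f (Suc k) h' q) (at q)"
  unfolding scale_mixture_def[abs_def]
proof (rule DERIV_integral_dominated[where e = "q / 2" and B = "\<lambda>\<sigma>. f \<sigma> * (2 ^ Suc k * C' / q ^ Suc k)"])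
  have [measurable]: "f \<in> borel_measurable borel" "h \<in> borel_measurable borel" "h' \<in> borel_measurable borel"
    using f_int h_meas h'_meas by auto
  fix t \<sigma> :: real assume t: "t \<in> ball q (q / 2)"
  then have t0: "q / 2 < t"
    by (rule mem_ball_half_radius)
  show "((\<lambda>t. indicator {0<..} \<sigma> * f \<sigma> * (h (t / \<sigma>\<^sup>2) / (\<sigma>\<^sup>2) ^ k)) has_real_derivative
      indicator {0<..} \<sigma> * f \<sigma> * (h' (t / \<sigma>\<^sup>2) / (\<sigma>\<^sup>2) ^ Suc k)) (at t)"
    using t0 q by (intro DERIV_scale_mixture_integrand deriv) auto
  have "\<bar>indicator {0<..} \<sigma> * f \<sigma> * (h' (t / \<sigma>\<^sup>2) / (\<sigma>\<^sup>2) ^ Suc k)\<bar> \<le> f \<sigma> * (C' / t ^ Suc k)"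
    using t0 q by (intro scale_mixture_integrand_bound[OF f_nonneg bound']) auto
  also have "\<dots> \<le> f \<sigma> * (2 ^ Suc k * C' / q ^ Suc k)"
  proof (intro mult_left_mono f_nonneg)
    have "0 \<le> C'"
      using bound'[of 1] by simp
    moreover have "(q / 2) ^ Suc k \<le> t ^ Suc k"
      using t0 q by (intro power_mono) auto
    ultimately show "C' / t ^ Suc k \<le> 2 ^ Suc k * C' / q ^ Suc k"
      using t0 q by (simp add: field_simps power_divide mult_left_mono)
  qed
  finally show "\<bar>indicator {0<..} \<sigma> * f \<sigma> * (h' (t / \<sigma>\<^sup>2) / (\<sigma>\<^sup>2) ^ Suc k)\<bar>
      \<le> f \<sigma> * (2 ^ Suc k * C' / q ^ Suc k)" .
  show "(\<lambda>\<sigma>. indicator {0<..} \<sigma> * f \<sigma> * (h (t / \<sigma>\<^sup>2) / (\<sigma>\<^sup>2) ^ k)) \<in> borel_measurable lborel"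
    by measurable
next
  have [measurable]: "f \<in> borel_measurable borel" "h' \<in> borel_measurable borel"
    using f_int h'_meas by auto
  show "(\<lambda>\<sigma>. indicator {0<..} \<sigma> * f \<sigma> * (h' (q / \<sigma>\<^sup>2) / (\<sigma>\<^sup>2) ^ Suc k)) \<in> borel_measurable lborel"
    by measurable
qed (use q f_int integrable_scale_mixture_integrand[OF f_nonneg f_int h_meas bound q] in auto)

lemma scale_mixture_nonneg:
  assumes "\<And>\<sigma>. 0 \<le> f \<sigma>" and "\<And>\<sigma>. 0 < \<sigma> \<Longrightarrow> f \<sigma> \<noteq> 0 \<Longrightarrow> 0 \<le> h (q / \<sigma>\<^sup>2)"
  shows "0 \<le> scale_mixture f k h q"
  unfolding scale_mixture_def
proof (rule Bochner_Integration.integral_nonneg)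
  fix \<sigma> :: real
  show "0 \<le> indicator {0<..} \<sigma> * f \<sigma> * (h (q / \<sigma>\<^sup>2) / (\<sigma>\<^sup>2) ^ k)"
    using assms(1)[of \<sigma>] assms(2)[of \<sigma>] by (cases "0 < \<sigma> \<and> f \<sigma> \<noteq> 0") (auto simp: indicator_def)
qed

lemma scale_mixture_nonpos:
  assumes "\<And>\<sigma>. 0 \<le> f \<sigma>" and "\<And>\<sigma>. 0 < \<sigma> \<Longrightarrow> f \<sigma> \<noteq> 0 \<Longrightarrow> h (q / \<sigma>\<^sup>2) \<le> 0"
  shows "scale_mixture f k h q \<le> 0"
proof -
  have "0 \<le> scale_mixture f k (\<lambda>a. - h a) q"
    using assms by (intro scale_mixture_nonneg) auto
  then show ?thesis
    by (simp add: scale_mixture_def)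
qed

lemma sets_lborel_translate:
  fixes s :: "'a::euclidean_space"
  assumes "\<Omega> \<in> sets lborel"
  shows "{y. s + y \<in> \<Omega>} \<in> sets lborel"
proof -
  have "{y. s + y \<in> \<Omega>} = (\<lambda>y. s + y) -` \<Omega> \<inter> space lborel" by auto
  also have "\<dots> \<in> sets lborel" using assms by measurable
  finally show ?thesis .
qed

lemma set_integral_scaleR_sqrt_region:
  fixes F :: "'a::euclidean_space \<Rightarrow> real"
  assumes p: "0 < p" and \<Omega>: "\<Omega> \<in> sets lborel" and [measurable]: "F \<in> borel_measurable borel"
  shows "(LINT r:((\<lambda>x. sqrt p *\<^sub>R x) ` \<Omega>)|lborel. F (r - sqrt p *\<^sub>R s))
    = p powr (real DIM('a) / 2) * (LINT y|lborel. indicator {y. s + y \<in> \<Omega>} y * F (sqrt p *\<^sub>R y))"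
proof -
  have sp: "0 < sqrt p" using p by simp
  have "indicator ((\<lambda>x. sqrt p *\<^sub>R x) ` \<Omega>) r = (indicator \<Omega> ((1 / sqrt p) *\<^sub>R r) :: real)" for r
  proof -
    have r: "r = sqrt p *\<^sub>R ((1 / sqrt p) *\<^sub>R r)" using sp by simp
    have "r \<in> (\<lambda>x. sqrt p *\<^sub>R x) ` \<Omega> \<longleftrightarrow> (1 / sqrt p) *\<^sub>R r \<in> \<Omega>"
    proof
      assume "(1 / sqrt p) *\<^sub>R r \<in> \<Omega>"
      then show "r \<in> (\<lambda>x. sqrt p *\<^sub>R x) ` \<Omega>"
        by (rule image_eqI[where f = "\<lambda>x. sqrt p *\<^sub>R x", OF r])
    qed (use sp in auto)
    then show ?thesis by (simp add: indicator_def)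
  qed
  then have "(LINT r:((\<lambda>x. sqrt p *\<^sub>R x) ` \<Omega>)|lborel. F (r - sqrt p *\<^sub>R s))
      = (LINT r|lborel. indicator \<Omega> ((1 / sqrt p) *\<^sub>R r) * F (r - sqrt p *\<^sub>R s))"
    by (simp add: set_lebesgue_integral_def)
  also have "\<dots> = \<bar>sqrt p\<bar> ^ DIM('a) * (LINT y|lborel. indicator \<Omega> ((1 / sqrt p) *\<^sub>R (sqrt p *\<^sub>R s + sqrt p *\<^sub>R y))
      * F ((sqrt p *\<^sub>R s + sqrt p *\<^sub>R y) - sqrt p *\<^sub>R s))"
    using sp \<Omega> by (intro lborel_integral_affine_euclidean) auto
  also have "\<dots> = p powr (real DIM('a) / 2) * (LINT y|lborel. indicator {y. s + y \<in> \<Omega>} y * F (sqrt p *\<^sub>R y))"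
  proof -
    have "(1 / sqrt p) *\<^sub>R (sqrt p *\<^sub>R s + sqrt p *\<^sub>R y) = s + y" for y :: 'a
      using sp by (simp add: scaleR_add_right)
    moreover have "\<bar>sqrt p\<bar> ^ DIM('a) = p powr (real DIM('a) / 2)"
      using p by (simp add: powr_half_sqrt[symmetric] powr_realpow[symmetric] powr_powr)
    ultimately show ?thesis
      by (simp add: indicator_def)
  qed
  finally show ?thesis .
qed

lemma measurable_sirp_density [measurable]:
  assumes [measurable]: "f \<in> borel_measurable borel"
  shows "(sirp_density f :: 'a::euclidean_space \<Rightarrow> real) \<in> borel_measurable borel"
  unfolding sirp_density_def[abs_def] set_lebesgue_integral_def by measurable

lemma sirp_density_scaleR_sqrt:
  fixes y :: "'a::euclidean_space"
  assumes p: "0 < p"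
  shows "p powr (real DIM('a) / 2) * sirp_density f (sqrt p *\<^sub>R y)
    = (LINT \<sigma>|lborel. indicator {0<..} \<sigma> * f \<sigma> * gauss_kernel (p / \<sigma>\<^sup>2) y)"
proof -
  let ?n = "real DIM('a)"
  have "p powr (?n / 2) * ((2 * pi * \<sigma>\<^sup>2) powr (- ?n / 2) * exp (- (norm (sqrt p *\<^sub>R y))\<^sup>2 / (2 * \<sigma>\<^sup>2)))
      = gauss_kernel (p / \<sigma>\<^sup>2) y" if \<sigma>: "0 < \<sigma>" for \<sigma>
  proof -
    have e1: "(2 * pi * \<sigma>\<^sup>2) powr (- ?n / 2) = (2 * pi) powr (- ?n / 2) * (\<sigma>\<^sup>2) powr (- ?n / 2)"
      by (rule powr_mult)
    have e2: "(\<sigma>\<^sup>2) powr (- ?n / 2) = 1 / (\<sigma>\<^sup>2) powr (?n / 2)"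
      by (simp add: powr_minus_divide)
    have e3: "(p / \<sigma>\<^sup>2) powr (?n / 2) = p powr (?n / 2) / (\<sigma>\<^sup>2) powr (?n / 2)"
      by (rule powr_divide)
    have e4: "- (norm (sqrt p *\<^sub>R y))\<^sup>2 / (2 * \<sigma>\<^sup>2) = - (p / \<sigma>\<^sup>2 * (norm y)\<^sup>2) / 2"
      using \<sigma> p by (simp add: power_mult_distrib)
    show ?thesis
      unfolding gauss_kernel_def e1 e2 e3 e4 by simp
  qed
  then show ?thesis
    unfolding sirp_density_def set_lebesgue_integral_def
    by (subst integral_mult_right_zero[symmetric], intro Bochner_Integration.integral_cong refl)
      (simp add: indicator_def mult.left_commute)
qed

lemma integrable_gauss_mixture_pair:
  fixes A :: "'a::euclidean_space set"
  assumes A: "A \<in> sets lborel" and f_nonneg: "\<And>\<sigma>. 0 \<le> f \<sigma>" and f_int: "integrable lborel f"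
    and p: "0 < p"
  shows "integrable (lborel \<Otimes>\<^sub>M lborel)
    (\<lambda>(\<sigma>, y::'a). indicator {0<..} \<sigma> * f \<sigma> * (indicator A y * gauss_kernel (p / \<sigma>\<^sup>2) y))"
    (is "integrable _ ?G")
proof (rule pair_sigma_finite.Fubini_integrable)
  have [measurable]: "f \<in> borel_measurable borel"
    using f_int by auto
  show "pair_sigma_finite (lborel :: real measure) (lborel :: 'a measure)"
    by (simp add: pair_sigma_finite_def lborel.sigma_finite_measure_axioms)
  show "?G \<in> borel_measurable (lborel \<Otimes>\<^sub>M lborel)"
    using A by measurable
  have "integrable lborel (\<lambda>\<sigma>. indicator {0<..} \<sigma> * f \<sigma> * (gauss_mass A (p / \<sigma>\<^sup>2) / (\<sigma>\<^sup>2) ^ 0))"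
    by (rule integrable_scale_mixture_integrand[OF f_nonneg f_int measurable_gauss_mass(1)[OF A] _ p,
          where C = "LINT z|lborel. \<bar>gauss_kernel 1 (z::'a)\<bar>"])
      (use abs_gauss_mass_le(1)[OF A] in simp)
  then show "integrable lborel (\<lambda>\<sigma>. LINT y|lborel. norm (?G (\<sigma>, y)))"
    using f_nonneg by (simp add: gauss_kernel_nonneg gauss_mass_def)
  show "AE \<sigma> in lborel. integrable lborel (\<lambda>y. ?G (\<sigma>, y))"
  proof (rule AE_I2)
    fix \<sigma> :: real
    show "integrable lborel (\<lambda>y. ?G (\<sigma>, y))"
    proof (cases "0 < \<sigma>")
      case True
      then have "integrable lborel (\<lambda>y. indicator A y * gauss_kernel (p / \<sigma>\<^sup>2) y)"
        using integrable_mult_indicator[OF A integrable_gauss_kernel(1)[of "p / \<sigma>\<^sup>2"]] p by simp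
      then show ?thesis by simp
    qed simp
  qed
qed

lemma integral_indicator_gauss_mixture:
  fixes A :: "'a::euclidean_space set"
  assumes A: "A \<in> sets lborel" and f_nonneg: "\<And>\<sigma>. 0 \<le> f \<sigma>" and f_int: "integrable lborel f"
    and p: "0 < p"
  shows "(LINT y|lborel. indicator A y * (LINT \<sigma>|lborel. indicator {0<..} \<sigma> * f \<sigma> * gauss_kernel (p / \<sigma>\<^sup>2) y))
    = scale_mixture f 0 (gauss_mass A) p"
proof -
  have PS: "pair_sigma_finite (lborel :: real measure) (lborel :: 'a measure)"
    by (simp add: pair_sigma_finite_def lborel.sigma_finite_measure_axioms)
  have "(LINT y|lborel. indicator A y * (LINT \<sigma>|lborel. indicator {0<..} \<sigma> * f \<sigma> * gauss_kernel (p / \<sigma>\<^sup>2) y))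
      = (LINT y|lborel. LINT \<sigma>|lborel. indicator {0<..} \<sigma> * f \<sigma> * (indicator A y * gauss_kernel (p / \<sigma>\<^sup>2) y))"
    by (intro Bochner_Integration.integral_cong refl, subst integral_mult_right_zero[symmetric])
      (simp add: mult_ac)
  also have "\<dots> = (LINT \<sigma>|lborel. LINT y|lborel. indicator {0<..} \<sigma> * f \<sigma> * (indicator A y * gauss_kernel (p / \<sigma>\<^sup>2) y))"
    using pair_sigma_finite.Fubini_integral[OF PS integrable_gauss_mixture_pair[OF A f_nonneg f_int p]] by simp
  also have "\<dots> = scale_mixture f 0 (gauss_mass A) p"
    by (simp add: scale_mixture_def gauss_mass_def)
  finally show ?thesis .
qed

lemma set_integral_sirp_density_region:
  fixes \<Omega> :: "'a::euclidean_space set" and s :: 'a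
  assumes \<Omega>: "\<Omega> \<in> sets lborel" and f_nonneg: "\<And>\<sigma>. 0 \<le> f \<sigma>" and f_int: "integrable lborel f"
    and p: "0 < p"
  shows "(LINT r:((\<lambda>x. sqrt p *\<^sub>R x) ` \<Omega>)|lborel. sirp_density f (r - sqrt p *\<^sub>R s))
    = scale_mixture f 0 (gauss_mass {y. s + y \<in> \<Omega>}) p"
proof -
  have [measurable]: "f \<in> borel_measurable borel"
    using f_int by auto
  have "(LINT r:((\<lambda>x. sqrt p *\<^sub>R x) ` \<Omega>)|lborel. sirp_density f (r - sqrt p *\<^sub>R s))
      = (LINT y|lborel. indicator {y. s + y \<in> \<Omega>} y * (p powr (real DIM('a) / 2) * sirp_density f (sqrt p *\<^sub>R y)))"
    using set_integral_scaleR_sqrt_region[OF p \<Omega>, of "sirp_density f" s]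
    by (simp add: mult.left_commute flip: integral_mult_right_zero)
  also have "\<dots> = scale_mixture f 0 (gauss_mass {y. s + y \<in> \<Omega>}) p"
    unfolding sirp_density_scaleR_sqrt[OF p]
    by (rule integral_indicator_gauss_mixture[OF sets_lborel_translate[OF \<Omega>] f_nonneg f_int p])
  finally show ?thesis .
qed

lemma DERIV_scale_mixture_gauss_mass:
  fixes A :: "'a::euclidean_space set"
  assumes A: "A \<in> sets lborel" and f_nonneg: "\<And>\<sigma>. 0 \<le> f \<sigma>" and f_int: "integrable lborel f"
    and q: "0 < q"
  shows "(scale_mixture f 0 (gauss_mass A) has_real_derivative scale_mixture f 1 (gauss_mass' A) q) (at q)"
    and "(scale_mixture f 1 (gauss_mass' A) has_real_derivative scale_mixture f 2 (gauss_mass'' A) q) (at q)"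
proof -
  let ?C = "\<lambda>g. LINT z|lborel. \<bar>g (1::real) (z::'a)\<bar>"
  show "(scale_mixture f 0 (gauss_mass A) has_real_derivative scale_mixture f 1 (gauss_mass' A) q) (at q)"
    using DERIV_scale_mixture[OF f_nonneg f_int measurable_gauss_mass(1,2)[OF A] DERIV_gauss_mass[OF A] _ _ q,
        where C = "?C gauss_kernel" and C' = "?C gauss_kernel'" and k = 0]
      abs_gauss_mass_le(1,2)[OF A]
    by simp
  show "(scale_mixture f 1 (gauss_mass' A) has_real_derivative scale_mixture f 2 (gauss_mass'' A) q) (at q)"
    using DERIV_scale_mixture[OF f_nonneg f_int measurable_gauss_mass(2,3)[OF A] DERIV_gauss_mass'[OF A] _ _ q,
        where C = "?C gauss_kernel'" and C' = "?C gauss_kernel''" and k = 1]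
      abs_gauss_mass_le(2,3)[OF A]
    by (simp add: numeral_2_eq_2)
qed

lemma DERIV_symbol_error_rate:
  fixes s :: "nat \<Rightarrow> 'a::euclidean_space"
  assumes f_nonneg: "\<And>\<sigma>. 0 \<le> f \<sigma>" and f_int: "integrable lborel f"
    and \<Omega>_meas: "\<And>k. k < M \<Longrightarrow> \<Omega> k \<in> sets lborel" and q: "0 < q"
  defines "A \<equiv> \<lambda>k. {y. s k + y \<in> \<Omega> k}"
  shows "(symbol_error_rate (sirp_density f) M prior s \<Omega> has_real_derivative
      - (\<Sum>k<M. prior k * scale_mixture f 1 (gauss_mass' (A k)) q)) (at q)"
    and "(deriv (symbol_error_rate (sirp_density f) M prior s \<Omega>) has_real_derivative
      - (\<Sum>k<M. prior k * scale_mixture f 2 (gauss_mass'' (A k)) q)) (at q)"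
proof -
  have A_meas: "A k \<in> sets lborel" if "k < M" for k
    unfolding A_def by (rule sets_lborel_translate[OF \<Omega>_meas[OF that]])
  have eq: "symbol_error_rate (sirp_density f) M prior s \<Omega> t
      = (\<Sum>k<M. prior k * (1 - scale_mixture f 0 (gauss_mass (A k)) t))" if "0 < t" for t
    unfolding symbol_error_rate_def A_def
    by (intro sum.cong refl) (simp add: set_integral_sirp_density_region[OF \<Omega>_meas f_nonneg f_int that])
  have D1: "(symbol_error_rate (sirp_density f) M prior s \<Omega> has_real_derivative
      - (\<Sum>k<M. prior k * scale_mixture f 1 (gauss_mass' (A k)) t)) (at t)" if t: "0 < t" for t
  proof (rule has_field_derivative_transform_within_open[where S = "{0<..}"])
    show "((\<lambda>t. \<Sum>k<M. prior k * (1 - scale_mixture f 0 (gauss_mass (A k)) t)) has_real_derivative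
        - (\<Sum>k<M. prior k * scale_mixture f 1 (gauss_mass' (A k)) t)) (at t)"
      by (auto intro!: derivative_eq_intros DERIV_scale_mixture_gauss_mass(1)[OF A_meas f_nonneg f_int t]
          simp: sum_negf mult.commute)
  qed (use t eq in auto)
  show "(symbol_error_rate (sirp_density f) M prior s \<Omega> has_real_derivative
      - (\<Sum>k<M. prior k * scale_mixture f 1 (gauss_mass' (A k)) q)) (at q)"
    by (rule D1[OF q])
  show "(deriv (symbol_error_rate (sirp_density f) M prior s \<Omega>) has_real_derivative
      - (\<Sum>k<M. prior k * scale_mixture f 2 (gauss_mass'' (A k)) q)) (at q)"
  proof (rule has_field_derivative_transform_within_open[where S = "{0<..}"])
    show "((\<lambda>t. - (\<Sum>k<M. prior k * scale_mixture f 1 (gauss_mass' (A k)) t)) has_real_derivative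
        - (\<Sum>k<M. prior k * scale_mixture f 2 (gauss_mass'' (A k)) q)) (at q)"
      by (intro DERIV_minus DERIV_sum DERIV_cmult DERIV_scale_mixture_gauss_mass(2)[OF A_meas f_nonneg f_int q])
        simp
  qed (use q DERIV_imp_deriv[OF D1] in auto)
qed

lemma center_convex_translate:
  assumes "center_convex s \<Omega>"
  shows "center_convex 0 {y. s + y \<in> \<Omega>}"
  unfolding center_convex_def closed_segment_def
  using center_convex_add_scaleR[OF assms] by auto

lemma center_convex_infdist_frontier_le_norm:
  fixes s :: "'a::euclidean_space"
  assumes cc: "center_convex s \<Omega>" and d: "0 < d" "d \<le> infdist s (frontier \<Omega>)" and z: "s + z \<notin> \<Omega>"
  shows "d \<le> norm z"
proof -
  have "frontier \<Omega> \<noteq> {}"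
    using d by (auto simp: infdist_def)
  then have "\<Omega> \<noteq> {}"
    by auto
  then obtain x where "x \<in> \<Omega>"
    by blast
  then have s: "s \<in> \<Omega>"
    using cc by (auto simp: center_convex_def)
  obtain b where b: "b \<in> closed_segment s (s + z)" "b \<in> frontier \<Omega>"
    using connected_Int_frontier[OF connected_segment, of s "s + z" \<Omega>] s z by blast
  have "d \<le> dist s b"
    using d(2) infdist_le[OF b(2), of s] by linarith
  also have "\<dots> \<le> dist s (s + z)"
    using dist_in_closed_segment[OF b(1)] by (simp add: dist_commute)
  finally show ?thesis
    by (simp add: dist_norm)
qed

lemma norm_le_of_frontier_dist_le:
  fixes s :: "'a::euclidean_space"
  assumes D: "\<And>b. b \<in> frontier \<Omega> \<Longrightarrow> dist s b \<le> D"
    and z: "s + z \<in> \<Omega>" and \<mu>: "1 < \<mu>" and z': "s + \<mu> *\<^sub>R z \<notin> \<Omega>"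
  shows "norm z \<le> D"
proof -
  obtain b where b: "b \<in> closed_segment (s + z) (s + \<mu> *\<^sub>R z)" "b \<in> frontier \<Omega>"
    using connected_Int_frontier[OF connected_segment, of "s + z" "s + \<mu> *\<^sub>R z" \<Omega>] z z' by blast
  then obtain u where u: "0 \<le> u" "u \<le> 1" "b = s + (1 + u * (\<mu> - 1)) *\<^sub>R z"
    unfolding closed_segment_def by (auto simp: algebra_simps)
  have "norm z \<le> (1 + u * (\<mu> - 1)) * norm z"
    using u \<mu> by (simp add: mult_le_cancel_right1)
  also have "\<dots> = dist s b"
    using u \<mu> by (simp add: dist_norm)
  also have "\<dots> \<le> D"
    by (rule D[OF b(2)])
  finally show ?thesis .
qed

lemma le_div_sq_mul_sq:
  fixes \<sigma> \<sigma>2 d r p c :: real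
  assumes "0 < \<sigma>" "\<sigma> \<le> \<sigma>2" "0 < d" "d \<le> r" "0 \<le> p" "c * \<sigma>2\<^sup>2 / d\<^sup>2 \<le> p"
  shows "c \<le> p / \<sigma>\<^sup>2 * r\<^sup>2"
proof (cases "c \<le> 0")
  case False
  have "c * \<sigma>\<^sup>2 \<le> c * \<sigma>2\<^sup>2"
    using assms False by (intro mult_left_mono power_mono) auto
  also have "\<dots> \<le> p * d\<^sup>2"
    using assms by (simp add: divide_le_eq)
  also have "\<dots> \<le> p * r\<^sup>2"
    using assms by (intro mult_left_mono power_mono) auto
  finally show ?thesis
    using assms(1) by (simp add: field_simps)
next
  case True
  moreover have "0 \<le> p / \<sigma>\<^sup>2 * r\<^sup>2"
    using assms(5) by simp
  ultimately show ?thesis by linarith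
qed

lemma div_sq_mul_sq_le:
  fixes \<sigma> \<sigma>1 D r p c :: real
  assumes "0 \<le> \<sigma>1" "\<sigma>1 \<le> \<sigma>" "0 < \<sigma>" "0 \<le> r" "r \<le> D" "0 < p" "p \<le> c * \<sigma>1\<^sup>2 / D\<^sup>2"
  shows "p / \<sigma>\<^sup>2 * r\<^sup>2 \<le> c"
proof (cases "D = 0")
  case False
  have pD: "p * D\<^sup>2 \<le> c * \<sigma>1\<^sup>2"
    using assms(7) False by (simp add: le_divide_eq)
  moreover have "0 < p * D\<^sup>2"
    using assms(6) False by simp
  ultimately have "0 \<le> c"
    by (smt (verit) mult_nonpos_nonneg zero_le_power2)
  have "p * r\<^sup>2 \<le> p * D\<^sup>2"
    using assms by (intro mult_left_mono power_mono) auto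
  also have "\<dots> \<le> c * \<sigma>\<^sup>2"
    using pD \<open>0 \<le> c\<close> assms(1,2) by (smt (verit) mult_left_mono power_mono)
  finally show ?thesis
    using assms(3) by (simp add: field_simps)
qed (use assms in simp)

lemma scale_mixture_gauss_mass''_nonpos:
  fixes s :: "'a::euclidean_space"
  assumes f_nonneg: "\<And>\<sigma>. 0 \<le> f \<sigma>" and f_supp: "\<And>\<sigma>. \<sigma> \<notin> {\<sigma>1..\<sigma>2} \<Longrightarrow> f \<sigma> = 0"
    and \<Omega>: "\<Omega> \<in> sets lborel" and cc: "center_convex s \<Omega>"
    and d: "0 < d" "d \<le> infdist s (frontier \<Omega>)"
    and p: "0 < p" "(real DIM('a) - 2) * \<sigma>2\<^sup>2 / d\<^sup>2 \<le> p"
  shows "scale_mixture f 2 (gauss_mass'' {y. s + y \<in> \<Omega>}) p \<le> 0"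
proof (rule scale_mixture_nonpos[OF f_nonneg])
  fix \<sigma> :: real assume \<sigma>: "0 < \<sigma>" "f \<sigma> \<noteq> 0"
  then have "\<sigma> \<le> \<sigma>2"
    using f_supp by fastforce
  show "gauss_mass'' {y. s + y \<in> \<Omega>} (p / \<sigma>\<^sup>2) \<le> 0"
  proof (rule gauss_mass''_nonpos[OF sets_lborel_translate[OF \<Omega>] _ center_convex_translate[OF cc]])
    fix z assume "z \<notin> {y. s + y \<in> \<Omega>}"
    then have "d \<le> norm z"
      using center_convex_infdist_frontier_le_norm[OF cc d] by simp
    with \<sigma>(1) \<open>\<sigma> \<le> \<sigma>2\<close> d(1) p show "real DIM('a) - 2 \<le> p / \<sigma>\<^sup>2 * (norm z)\<^sup>2"
      by (intro le_div_sq_mul_sq) auto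
  qed (use p \<sigma> in simp)
qed

lemma scale_mixture_gauss_mass''_nonneg:
  fixes s :: "'a::euclidean_space"
  assumes f_nonneg: "\<And>\<sigma>. 0 \<le> f \<sigma>" and f_supp: "\<And>\<sigma>. \<sigma> \<notin> {\<sigma>1..\<sigma>2} \<Longrightarrow> f \<sigma> = 0" and "0 \<le> \<sigma>1"
    and \<Omega>: "\<Omega> \<in> sets lborel" and cc: "center_convex s \<Omega>"
    and D: "\<And>b. b \<in> frontier \<Omega> \<Longrightarrow> dist s b \<le> D"
    and p: "0 < p" "p \<le> (real DIM('a) - 2) * \<sigma>1\<^sup>2 / D\<^sup>2"
  shows "0 \<le> scale_mixture f 2 (gauss_mass'' {y. s + y \<in> \<Omega>}) p"
proof (rule scale_mixture_nonneg[OF f_nonneg])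
  fix \<sigma> :: real assume \<sigma>: "0 < \<sigma>" "f \<sigma> \<noteq> 0"
  then have "\<sigma>1 \<le> \<sigma>"
    using f_supp by fastforce
  show "0 \<le> gauss_mass'' {y. s + y \<in> \<Omega>} (p / \<sigma>\<^sup>2)"
  proof (rule gauss_mass''_nonneg[OF sets_lborel_translate[OF \<Omega>] _ center_convex_translate[OF cc]])
    fix z \<mu> assume "z \<in> {y. s + y \<in> \<Omega>}" "1 < \<mu>" "\<mu> *\<^sub>R z \<notin> {y. s + y \<in> \<Omega>}"
    then have "norm z \<le> D"
      using norm_le_of_frontier_dist_le[OF D] by simp
    with \<sigma>(1) \<open>\<sigma>1 \<le> \<sigma>\<close> \<open>0 \<le> \<sigma>1\<close> p show "p / \<sigma>\<^sup>2 * (norm z)\<^sup>2 \<le> real DIM('a) - 2"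
      by (intro div_sq_mul_sq_le) auto
  qed (use p \<sigma> in simp)
qed

lemma d_min_le_infdist:
  "k < M \<Longrightarrow> d_min M s \<Omega> \<le> infdist (s k) (frontier (\<Omega> k))"
  unfolding d_min_def by (intro Min_le) auto

lemma dist_frontier_le_d_max:
  assumes "d_max M s \<Omega> = ereal D" "k < M" "b \<in> frontier (\<Omega> k)"
  shows "dist (s k) b \<le> D"
proof -
  have "ereal (dist (s k) b) \<le> (SUP b\<in>frontier (\<Omega> k). ereal (dist (s k) b))"
    by (rule SUP_upper[OF assms(3)])
  also have "\<dots> \<le> d_max M s \<Omega>"
    unfolding d_max_def using assms(2) by (intro Max_ge) auto
  finally show ?thesis
    using assms(1) by simp
qed

theorem theorem5:
  fixes f :: "real \<Rightarrow> real" and \<sigma>1 \<sigma>2 :: real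
    and M :: nat and prior :: "nat \<Rightarrow> real"
    and s :: "nat \<Rightarrow> 'a::euclidean_space" and \<Omega> :: "nat \<Rightarrow> 'a set"
    and p :: real
  assumes sigma: "0 \<le> \<sigma>1" "\<sigma>1 \<le> \<sigma>2"
    and f_nonneg: "\<And>\<sigma>. 0 \<le> f \<sigma>"
    and f_supp: "\<And>\<sigma>. \<sigma> \<notin> {\<sigma>1..\<sigma>2} \<Longrightarrow> f \<sigma> = 0"
    and f_int: "integrable lborel f"
    and f_norm: "(LINT \<sigma>|lborel. f \<sigma>) = 1"
    and M_pos: "0 < M"
    and prior_nonneg: "\<And>k. k < M \<Longrightarrow> 0 \<le> prior k"
    and prior_sum: "(\<Sum>k<M. prior k) = 1"
    and \<Omega>_meas: "\<And>k. k < M \<Longrightarrow> \<Omega> k \<in> sets lborel"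
    and \<Omega>_disj: "\<And>j k. j < M \<Longrightarrow> k < M \<Longrightarrow> j \<noteq> k \<Longrightarrow> \<Omega> j \<inter> \<Omega> k = {}"
    and \<Omega>_cc: "\<And>k. k < M \<Longrightarrow> center_convex (s k) (\<Omega> k)"
    and p_pos: "0 < p"
  shows "(\<forall>q>0. symbol_error_rate (sirp_density f) M prior s \<Omega> differentiable (at q))
    \<and> (0 < d_min M s \<Omega> \<and> (real DIM('a) - 2) * \<sigma>2\<^sup>2 / (d_min M s \<Omega>)\<^sup>2 \<le> p \<longrightarrow>
         (\<exists>D. (deriv (symbol_error_rate (sirp_density f) M prior s \<Omega>) has_real_derivative D) (at p)
              \<and> 0 \<le> D))
    \<and> (\<forall>dmax. d_max M s \<Omega> = ereal dmax \<and> p \<le> (real DIM('a) - 2) * \<sigma>1\<^sup>2 / dmax\<^sup>2 \<longrightarrow>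
         (\<exists>D. (deriv (symbol_error_rate (sirp_density f) M prior s \<Omega>) has_real_derivative D) (at p)
              \<and> D \<le> 0))"
proof -
  let ?E = "symbol_error_rate (sirp_density f) M prior s \<Omega>"
  let ?P2 = "\<lambda>k. scale_mixture f 2 (gauss_mass'' {y. s k + y \<in> \<Omega> k}) p"
  have "\<forall>q>0. ?E differentiable (at q)"
    using DERIV_symbol_error_rate(1)[where \<Omega> = \<Omega> and s = s and prior = prior, OF f_nonneg f_int \<Omega>_meas]
    unfolding real_differentiable_def by blast
  moreover have "(deriv ?E has_real_derivative - (\<Sum>k<M. prior k * ?P2 k)) (at p)"
    using DERIV_symbol_error_rate(2)[where \<Omega> = \<Omega> and s = s and prior = prior, OF f_nonneg f_int \<Omega>_meas p_pos] .
  moreover have "(\<Sum>k<M. prior k * ?P2 k) \<le> 0"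
    if "0 < d_min M s \<Omega>" "(real DIM('a) - 2) * \<sigma>2\<^sup>2 / (d_min M s \<Omega>)\<^sup>2 \<le> p"
    using scale_mixture_gauss_mass''_nonpos[OF f_nonneg f_supp \<Omega>_meas \<Omega>_cc that(1) d_min_le_infdist p_pos that(2)]
      prior_nonneg by (intro sum_nonpos mult_nonneg_nonpos) auto
  moreover have "0 \<le> (\<Sum>k<M. prior k * ?P2 k)"
    if "d_max M s \<Omega> = ereal dmax" "p \<le> (real DIM('a) - 2) * \<sigma>1\<^sup>2 / dmax\<^sup>2" for dmax
    using scale_mixture_gauss_mass''_nonneg[OF f_nonneg f_supp sigma(1) \<Omega>_meas \<Omega>_cc
        dist_frontier_le_d_max[OF that(1)] p_pos that(2)]
      prior_nonneg by (intro sum_nonneg mult_nonneg_nonneg) auto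
  ultimately show ?thesis
    by (smt (verit))
qed

end
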